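(* Let $X$ be a mixed-stable sequence with respect to a full BST $T$. If $GF$ serves $X$ starting with initial tree $T$, then it never restructures the tree: $T_t=T$ for every $t$.
   Context: Binary search tree model and $GF$. Keys are $\{1,\dots,n\}$ and $X=[x_1,\dots,x_m]$ is a query sequence. An algorithm serving $X$ holds a BST $T_{t-1}$ before serving $x_t$, searches $x_t$ from the root, and may then restructure by rotations into $T_t$. Greedy Future ($GF$). After finding $x_t$ in $T_{t-1}$, let $v_1<\dots<v_k$ be the keys on the root-to-$x_t$ path, set $v_0=-\infty$ and $v_{k+1}=+\infty$, and let $R_0,\dots,R_k$ be the subtrees hanging off this path. For each $i$, $\tau(v_i)$ is the smallest $s>t$ with $x_s\in(v_{i-1},v_{i+1})$, or $+\infty$ if there is none. $GF$ rearranges $v_1,\dots,v_k$ as a treap: a BST in key order and a heap in $\tau$, with the smallest $\tau$ at the top. Ties in $\tau$ are broken in favor of the node of smaller depth in $T_{t-1}$. It then reattaches $R_0,\dots,R_k$ unchanged at their unique positions, giving $T_t$. Stable sequences. Let $T$ be a full binary search tree (every inner node has exactly two children), and let $X$ be a query sequence consisting only of keys stored at leaves of $T$. For an inner node $v$, let $X_v$ be the subsequence of $X$ consisting of the queries to keys in the subtree of $v$. - The node $v$ is strongly-stable if consecutive queries of $X_v$ alternate between the left and right subtrees of $v$. - The node $v$ is weakly-stable with a left bias if its left child $u$ is an inner node and $X_v$ repeats cyclically (from some starting phase) the pattern: a query in the left subtree of $u$, then one in the right subtree of $u$, then one in the right subtree of $v$. - Weakly-stable with a right bias is the mirror image: $u$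 is the right child of $v$, and the pattern is right subtree of $u$, left subtree of $u$, left subtree of $v$. In both weakly-stable cases $u$ is called the favored child of $v$. $X$ (and $T$) is mixed-stable if every inner node of $T$ is strongly-stable or weakly-stable. *)

theory Defs
  imports "HOL-Library.Tree" "HOL-Library.Extended_Nat" "HOL-Library.Product_Lexorder"
begin

fun search_path :: "nat \<Rightarrow> nat tree \<Rightarrow> nat list" where
  "search_path x Leaf = []"
| "search_path x (Node l a r) =
     a # (if x < a then search_path x l else if a < x then search_path x r else [])"

(* depth of key v (root has depth 0), meaningful when v is in the BST *)
definition depth :: "nat \<Rightarrow> nat tree \<Rightarrow> nat" where
  "depth v T = length (search_path v T) - 1"

(* subtrees R_0,...,R_k hanging off the search path to x, in key order *)
fun hanging :: "nat \<Rightarrow> nat tree \<Rightarrow> nat tree list" where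
  "hanging x Leaf = [Leaf]"
| "hanging x (Node l a r) =
     (if x < a then hanging x l @ [r] else if a < x then l # hanging x r else [l, r])"

fun minidx :: "'b::linorder list \<Rightarrow> nat" where
  "minidx [] = 0"
| "minidx [x] = 0"
| "minidx (x # y # ys) = (let j = minidx (y # ys) in if x \<le> (y # ys) ! j then 0 else Suc j)"

lemma minidx_less: "xs \<noteq> [] \<Longrightarrow> minidx xs < length xs"
  by (induction xs rule: minidx.induct) (auto simp: Let_def)

(* treap from keys (in key order) with priorities (smallest on top), with the
   hanging subtrees ts (length = number of keys + 1) reattached *)
function treap :: "('a \<times> 'b::linorder) list \<Rightarrow> 'a tree list \<Rightarrow> 'a tree" where
  "treap kps ts =
     (if kps = [] then (case ts of [] \<Rightarrow> Leaf | t # _ \<Rightarrow> t)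
      else (let j = minidx (map snd kps) in
            Node (treap (take j kps) (take (Suc j) ts))
                 (fst (kps ! j))
                 (treap (drop (Suc j) kps) (drop (Suc j) ts))))"
  by pat_completeness auto
termination
proof (relation "measure (\<lambda>(kps, ts). length kps)", goal_cases)
  case 1 then show ?case by simp
next
  case (2 kps ts j)
  then have "j < length kps" using minidx_less[of "map snd kps"] by simp
  then show ?case by simp
next
  case (3 kps ts j)
  then show ?case by simp
qed

(* membership of y in the open interval (lo, hi), None meaning -\<infinity> resp. +\<infinity> *)
definition in_window :: "nat option \<Rightarrow> nat option \<Rightarrow> nat \<Rightarrow> bool" where
  "in_window lo hi y =
     ((case lo of None \<Rightarrow> True | Some a \<Rightarrow> a < y) \<and> (case hi of None \<Rightarrow> True | Some b \<Rightarrow> y < b))"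

(* tau: smallest s > t with xs!s in the window, or \<infinity>; indices are 0-based *)
definition next_in :: "nat list \<Rightarrow> nat \<Rightarrow> nat option \<Rightarrow> nat option \<Rightarrow> enat" where
  "next_in xs t lo hi =
     (if \<exists>s. t < s \<and> s < length xs \<and> in_window lo hi (xs ! s)
      then enat (LEAST s. t < s \<and> s < length xs \<and> in_window lo hi (xs ! s))
      else \<infinity>)"

(* one step of Greedy Future: serve query xs!t (0-based) in tree T *)
definition gf_step :: "nat list \<Rightarrow> nat \<Rightarrow> nat tree \<Rightarrow> nat tree" where
  "gf_step xs t T =
     (let q = xs ! t;
          vs = sort (search_path q T);
          k = length vs;
          lo = (\<lambda>i. if i = 0 then None else Some (vs ! (i - 1)));
          hi = (\<lambda>i. if Suc i < k then Some (vs ! Suc i) else None);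
          prio = (\<lambda>i. (next_in xs t (lo i) (hi i), depth (vs ! i) T))
      in treap (map (\<lambda>i. (vs ! i, prio i)) [0..<k]) (hanging q T))"

(* gf_run xs T t = T_t, the tree after serving the first t queries, T_0 = T *)
fun gf_run :: "nat list \<Rightarrow> nat tree \<Rightarrow> nat \<Rightarrow> nat tree" where
  "gf_run xs T 0 = T"
| "gf_run xs T (Suc t) = gf_step xs t (gf_run xs T t)"

definition full_tree :: "'a tree \<Rightarrow> bool" where
  "full_tree T = (\<forall>l a r. Node l a r \<in> subtrees T \<longrightarrow> (l = Leaf \<longleftrightarrow> r = Leaf))"

definition leaf_keys :: "'a tree \<Rightarrow> 'a set" where
  "leaf_keys T = {a. Node Leaf a Leaf \<in> subtrees T}"

definition subseq_in :: "nat list \<Rightarrow> nat tree \<Rightarrow> nat list" where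
  "subseq_in xs v = filter (\<lambda>x. x \<in> set_tree v) xs"

definition strongly_stable :: "nat list \<Rightarrow> nat tree \<Rightarrow> bool" where
  "strongly_stable xs v =
     (case v of Leaf \<Rightarrow> False | Node l a r \<Rightarrow>
       (let Xv = subseq_in xs v in
        \<forall>j. Suc j < length Xv \<longrightarrow> ((Xv ! j \<in> set_tree l) \<longleftrightarrow> (Xv ! Suc j \<in> set_tree r))))"

definition cyclic3 :: "nat list \<Rightarrow> nat set \<Rightarrow> nat set \<Rightarrow> nat set \<Rightarrow> bool" where
  "cyclic3 Xv A B C =
     (\<exists>ph<3. \<forall>j<length Xv.
        Xv ! j \<in> (if (j + ph) mod 3 = 0 then A else if (j + ph) mod 3 = 1 then B else C))"

definition weakly_stable_left :: "nat list \<Rightarrow> nat tree \<Rightarrow> bool" where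
  "weakly_stable_left xs v =
     (case v of Leaf \<Rightarrow> False | Node u a r \<Rightarrow>
       (case u of Leaf \<Rightarrow> False | Node ul b ur \<Rightarrow>
          ul \<noteq> Leaf \<and> cyclic3 (subseq_in xs v) (set_tree ul) (set_tree ur) (set_tree r)))"

definition weakly_stable_right :: "nat list \<Rightarrow> nat tree \<Rightarrow> bool" where
  "weakly_stable_right xs v =
     (case v of Leaf \<Rightarrow> False | Node l a u \<Rightarrow>
       (case u of Leaf \<Rightarrow> False | Node ul b ur \<Rightarrow>
          ur \<noteq> Leaf \<and> cyclic3 (subseq_in xs v) (set_tree ur) (set_tree ul) (set_tree l)))"

definition mixed_stable :: "nat tree \<Rightarrow> nat list \<Rightarrow> bool" where
  "mixed_stable T xs =
     (\<forall>l a r. Node l a r \<in> subtrees T \<and> l \<noteq> Leaf \<longrightarrow>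
        strongly_stable xs (Node l a r) \<or> weakly_stable_left xs (Node l a r)
        \<or> weakly_stable_right xs (Node l a r))"

end

theory Submission
  imports Defs "HOL-Library.Multiset"
begin

text \<open>
  GF rebuilds the search path as a treap under the priorities (\<tau>, depth), so the tree stays
  unchanged as soon as \<tau> never decreases from a path node w to its child c on the path: depth
  then breaks ties, and the treap reassembles the path exactly as it was.
  Only keys below c lie in the window of c, so the next query in that window comes no earlier
  than the successor of x_t in the subsequence of queries to the subtree of w.  Mixed
  stability places that successor in the subtree of w on the other side from x_t, or, for a
  weakly stable w with x_t in the favoured child's outer subtree, in the favoured child's
  inner subtree; either way it lies in the window of w, hence \<tau>(w) \<le> \<tau>(c).
\<close>

section \<open>Search paths\<close>

lemma subtrees_trans: "s \<in> subtrees t \<Longrightarrow> u \<in> subtrees s \<Longrightarrow> u \<in> subtrees t"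
  by (induction t) auto

lemma set_tree_subtrees: "s \<in> subtrees t \<Longrightarrow> set_tree s \<subseteq> set_tree t"
  by (induction t) auto

lemma bst_subtrees: "bst t \<Longrightarrow> s \<in> subtrees t \<Longrightarrow> bst s"
  by (induction t) auto

lemma subtree_unique:
  "\<lbrakk>bst T; Node l x r \<in> subtrees T; Node l' x r' \<in> subtrees T\<rbrakk> \<Longrightarrow> l = l' \<and> r = r'"
proof (induction T)
  case (Node L a R)
  consider "x < a" | "x = a" | "a < x" by fastforce
  then show ?case
  proof cases
    case 1
    with Node.prems have "x \<notin> set_tree R" by auto
    with 1 have "Node l x r \<in> subtrees L \<and> Node l' x r' \<in> subtrees L"
      using Node.prems by auto
    then show ?thesis using Node by auto
  next
    case 2
    with Node.prems have "x \<notin> set_tree L" "x \<notin> set_tree R" by auto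
    with 2 show ?thesis using Node.prems by auto
  next
    case 3
    with Node.prems have "x \<notin> set_tree L" by auto
    with 3 have "Node l x r \<in> subtrees R \<and> Node l' x r' \<in> subtrees R"
      using Node.prems by auto
    then show ?thesis using Node by auto
  qed
qed simp

lemma leaf_keys_subset: "leaf_keys T \<subseteq> set_tree T"
  unfolding leaf_keys_def by (auto dest: in_set_tree_if)

lemma inner_key_not_leaf_key:
  "\<lbrakk>bst T; Node l x r \<in> subtrees T; l \<noteq> Leaf\<rbrakk> \<Longrightarrow> x \<notin> leaf_keys T"
  unfolding leaf_keys_def using subtree_unique by blast

lemma set_search_path_subset: "set (search_path q T) \<subseteq> set_tree T"
  by (induction T) auto

lemma length_hanging: "length (hanging q T) = Suc (length (search_path q T))"
  by (induction T) auto

lemma distinct_search_path: "bst T \<Longrightarrow> distinct (search_path q T)"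
  using set_search_path_subset by (induction T) fastforce+

lemma search_path_nth:
  "\<lbrakk>bst T; i < length (search_path q T)\<rbrakk> \<Longrightarrow>
     search_path (search_path q T ! i) T = take (Suc i) (search_path q T)"
proof (induction T arbitrary: i)
  case (Node l a r)
  show ?case
  proof (cases i)
    case (Suc i')
    consider "q < a" "i' < length (search_path q l)" | "a < q" "i' < length (search_path q r)"
      using Node.prems(2) Suc by (auto split: if_splits)
    then show ?thesis
    proof cases
      case 1
      then have "search_path q l ! i' \<in> set_tree l"
        using set_search_path_subset nth_mem by blast
      then show ?thesis using 1 Node Suc by auto
    next
      case 2
      then have "search_path q r ! i' \<in> set_tree r"
        using set_search_path_subset nth_mem by blast
      then show ?thesis using 2 Node Suc by auto
    qed
  qed simp
qed simp

lemma subtree_at_search_path: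
  assumes "bst T" "q \<in> set_tree T" "i < length (search_path q T)"
  obtains l r where "Node l (search_path q T ! i) r \<in> subtrees T"
    "q \<in> set_tree (Node l (search_path q T ! i) r)"
    "search_path q (Node l (search_path q T ! i) r) = drop i (search_path q T)"
  using assms
proof (induction T arbitrary: i thesis)
  case (Node l a r)
  show ?case
  proof (cases i)
    case 0 then show ?thesis using Node.prems by auto
  next
    case (Suc i')
    consider "q < a" "i' < length (search_path q l)" | "a < q" "i' < length (search_path q r)"
      using Node.prems(4) Suc by (auto split: if_splits)
    then show ?thesis
    proof cases
      case 1
      with Node.prems have "q \<in> set_tree l" "bst l" by auto
      with 1 obtain l' r' where "Node l' (search_path q l ! i') r' \<in> subtrees l"
        "q \<in> set_tree (Node l' (search_path q l ! i') r')"
        "search_path q (Node l' (search_path q l ! i') r') = drop i' (search_path q l)"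
        using Node.IH(1) by blast
      with 1 show ?thesis using Node.prems(1) unfolding Suc by auto
    next
      case 2
      with Node.prems have "q \<in> set_tree r" "bst r" by auto
      with 2 obtain l' r' where "Node l' (search_path q r ! i') r' \<in> subtrees r"
        "q \<in> set_tree (Node l' (search_path q r ! i') r')"
        "search_path q (Node l' (search_path q r ! i') r') = drop i' (search_path q r)"
        using Node.IH(2) by blast
      with 2 show ?thesis using Node.prems(1) unfolding Suc by auto
    qed
  qed
qed simp

lemma search_path_child:
  assumes "search_path q (Node l w r) = w # c # ps"
  obtains cl cr where "q < w" "l = Node cl c cr" | cl cr where "w < q" "r = Node cl c cr"
  using assms by (cases l; cases r) (auto split: if_splits)

lemma set_take_Suc_Un_drop: "set xs = set (take (Suc i) xs) \<union> set (drop i xs)"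
proof -
  have "set xs = set (take i xs) \<union> set (drop i xs)" by (metis append_take_drop_id set_append)
  moreover have "set (take i xs) \<subseteq> set (take (Suc i) xs)" by (rule set_take_subset_set_take) simp
  ultimately show ?thesis using set_take_subset[of "Suc i" xs] by blast
qed

lemma search_path_edge:
  fixes q :: nat and T :: "nat tree"
  defines "p \<equiv> search_path q T"
  assumes bst: "bst T" and q: "q \<in> set_tree T" and i: "Suc i < length p"
  obtains l r cl cr where "Node l (p ! i) r \<in> subtrees T" "q \<in> set_tree (Node l (p ! i) r)"
    "l = Node cl (p ! Suc i) cr \<or> r = Node cl (p ! Suc i) cr"
    "set p = set (search_path (p ! i) T) \<union> set (search_path q (Node l (p ! i) r))"
proof -
  obtain l r where sub: "Node l (p ! i) r \<in> subtrees T" and q_in: "q \<in> set_tree (Node l (p ! i) r)"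
    and local: "search_path q (Node l (p ! i) r) = drop i p"
    using subtree_at_search_path[OF bst q Suc_lessD[OF i[unfolded p_def]]] unfolding p_def by blast
  have "search_path q (Node l (p ! i) r) = p ! i # p ! Suc i # drop (Suc (Suc i)) p"
    unfolding local using i by (simp add: Cons_nth_drop_Suc)
  then obtain cl cr where "l = Node cl (p ! Suc i) cr \<or> r = Node cl (p ! Suc i) cr"
    by (rule search_path_child) blast+
  moreover have "search_path (p ! i) T = take (Suc i) p"
    using search_path_nth[OF bst Suc_lessD[OF i[unfolded p_def]]] unfolding p_def .
  then have "set p = set (search_path (p ! i) T) \<union> set (search_path q (Node l (p ! i) r))"
    unfolding local using set_take_Suc_Un_drop by metis
  ultimately show thesis using that sub q_in by blast
qed

section \<open>Windows and stability\<close>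

text \<open>
  The GF window of a path key v, stated without its neighbours: y lies in the window of v with
  respect to the path keys P iff no key of P lies between v (exclusive) and y (inclusive).
\<close>

definition unseparated :: "'a::linorder set \<Rightarrow> 'a \<Rightarrow> 'a \<Rightarrow> bool" where
  "unseparated P v y \<longleftrightarrow> (\<forall>z\<in>P. (z < v \<longrightarrow> z < y) \<and> (v < z \<longrightarrow> y < z))"

lemma in_window_iff_unseparated:
  assumes sorted: "sorted_wrt (<) vs" and i: "i < length vs"
  shows "in_window (if i = 0 then None else Some (vs ! (i - 1)))
           (if Suc i < length vs then Some (vs ! Suc i) else None) y
         \<longleftrightarrow> unseparated (set vs) (vs ! i) y"
proof -
  have less_iff: "vs ! k < vs ! i \<longleftrightarrow> k < i" "vs ! i < vs ! k \<longleftrightarrow> i < k" if "k < length vs" for k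
    using sorted_wrt_nth_less[OF sorted] that i by (metis not_less_iff_gr_or_eq order.asym)+
  have mono: "vs ! k \<le> vs ! m" if "k \<le> m" "m < length vs" for k m
    using sorted that strict_sorted_iff sorted_nth_mono by blast
  have below: "(\<forall>k<length vs. k < i \<longrightarrow> vs ! k < y) \<longleftrightarrow> (i = 0 \<or> vs ! (i - 1) < y)"
    using i mono[of _ "i - 1"] by (cases i) (auto intro: le_less_trans simp: less_Suc_eq_le)
  have above: "(\<forall>k<length vs. i < k \<longrightarrow> y < vs ! k) \<longleftrightarrow> (Suc i < length vs \<longrightarrow> y < vs ! Suc i)"
    using mono[of "Suc i"] by (auto intro: less_le_trans simp: Suc_le_eq)
  have "unseparated (set vs) (vs ! i) y \<longleftrightarrow>
        (\<forall>k<length vs. (k < i \<longrightarrow> vs ! k < y) \<and> (i < k \<longrightarrow> y < vs ! k))"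
    unfolding unseparated_def all_set_conv_all_nth using less_iff by auto
  then show ?thesis
    unfolding in_window_def using below above by auto
qed

lemma unseparated_Un: "unseparated (A \<union> B) v y \<longleftrightarrow> unseparated A v y \<and> unseparated B v y"
  unfolding unseparated_def by blast

lemma ancestor_between:
  assumes "bst T" "Node l x r \<in> subtrees T" "y \<in> set_tree T" "y \<notin> set_tree (Node l x r)"
  shows "\<exists>z\<in>set (search_path x T). y \<le> z \<and> z < x \<or> x < z \<and> z \<le> y"
  using assms
proof (induction T)
  case (Node L a R)
  consider "Node l x r \<in> subtrees L" | "Node l x r \<in> subtrees R"
    using Node.prems by auto
  then show ?case
  proof cases
    case 1
    with Node.prems have "x < a" using set_tree_subtrees by fastforce
    then show ?thesis using Node 1 by (cases "y \<in> set_tree L") auto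
  next
    case 2
    with Node.prems have "a < x" using set_tree_subtrees by fastforce
    then show ?thesis using Node 2 by (cases "y \<in> set_tree R") auto
  qed
qed simp

lemma unseparated_ancestors:
  assumes "bst T" "Node l x r \<in> subtrees T" "y \<in> set_tree (Node l x r)"
  shows "unseparated (set (search_path x T)) x y"
  using assms
proof (induction T)
  case (Node L a R)
  consider "Node l x r \<in> subtrees L" | "Node l x r \<in> subtrees R" | "x = a"
    using Node.prems by auto
  then show ?case
  proof cases
    case 1
    with Node.prems have "x \<in> set_tree L" "y \<in> set_tree L" using set_tree_subtrees by fastforce+
    then show ?thesis using Node 1 by (auto simp: unseparated_def)
  next
    case 2
    with Node.prems have "x \<in> set_tree R" "y \<in> set_tree R" using set_tree_subtrees by fastforce+
    then show ?thesis using Node 2 by (auto simp: unseparated_def)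
  qed (simp add: unseparated_def)
qed simp

lemma unseparated_imp_in_subtree:
  assumes "bst T" "Node l x r \<in> subtrees T" "set (search_path x T) \<subseteq> P" "y \<in> set_tree T"
    "unseparated P x y"
  shows "y \<in> set_tree (Node l x r)"
proof (rule ccontr)
  assume "y \<notin> set_tree (Node l x r)"
  then obtain z where "z \<in> P" "y \<le> z \<and> z < x \<or> x < z \<and> z \<le> y"
    using ancestor_between[OF assms(1,2,4)] assms(3) by blast
  then show False using assms(5) unfolding unseparated_def by force
qed

lemma unseparated_opposite_sides:
  assumes "bst (Node l w r)"
    and "q \<in> set_tree l \<and> y \<in> set_tree r \<or> q \<in> set_tree r \<and> y \<in> set_tree l"
  shows "unseparated (set (search_path q (Node l w r))) w y"
  using assms(2)
proof
  assume *: "q \<in> set_tree l \<and> y \<in> set_tree r"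
  then have "\<forall>z\<in>set (search_path q l). z < w \<and> z < y" "q < w"
    using assms(1) set_search_path_subset[of q l] by fastforce+
  with * show ?thesis unfolding unseparated_def by auto
next
  assume *: "q \<in> set_tree r \<and> y \<in> set_tree l"
  then have "\<forall>z\<in>set (search_path q r). w < z \<and> y < z" "w < q"
    using assms(1) set_search_path_subset[of q r] by fastforce+
  with * show ?thesis unfolding unseparated_def by auto
qed

lemma unseparated_grandchild:
  assumes "bst (Node l w r)"
    and "l = Node ll c lr \<and> q \<in> set_tree ll \<and> y \<in> set_tree lr
      \<or> r = Node rl c rr \<and> q \<in> set_tree rr \<and> y \<in> set_tree rl"
  shows "unseparated (set (search_path q (Node l w r))) w y"
  using assms(2)
proof
  assume *: "l = Node ll c lr \<and> q \<in> set_tree ll \<and> y \<in> set_tree lr"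
  then have "\<forall>z\<in>set (search_path q ll). z < c" "q < c" "c < y" "y < w"
    using assms(1) set_search_path_subset[of q ll] by auto
  with * show ?thesis unfolding unseparated_def by auto
next
  assume *: "r = Node rl c rr \<and> q \<in> set_tree rr \<and> y \<in> set_tree rl"
  then have "\<forall>z\<in>set (search_path q rr). c < z" "c < q" "y < c" "w < y"
    using assms(1) set_search_path_subset[of q rr] by auto
  with * show ?thesis unfolding unseparated_def by auto
qed

lemma cyclic3_consecutive:
  assumes "cyclic3 Xv A B C" "Suc j < length Xv"
  shows "Xv ! j \<in> A \<and> Xv ! Suc j \<in> B \<or> Xv ! j \<in> B \<and> Xv ! Suc j \<in> C
    \<or> Xv ! j \<in> C \<and> Xv ! Suc j \<in> A"
proof -
  obtain ph where ph: "\<forall>j<length Xv.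
      Xv ! j \<in> (if (j + ph) mod 3 = 0 then A else if (j + ph) mod 3 = 1 then B else C)"
    using assms(1) unfolding cyclic3_def by blast
  have "(j + ph) mod 3 = 0 \<and> (Suc j + ph) mod 3 = 1 \<or> (j + ph) mod 3 = 1 \<and> (Suc j + ph) mod 3 = 2
      \<or> (j + ph) mod 3 = 2 \<and> (Suc j + ph) mod 3 = 0"
    by presburger
  then show ?thesis
    using ph[rule_format, of j] ph[rule_format, of "Suc j"] assms(2) by auto
qed

lemma stable_successor_unseparated:
  fixes xs :: "nat list" and l r :: "nat tree" and w :: nat
  defines "Xv \<equiv> subseq_in xs (Node l w r)"
  assumes bst: "bst (Node l w r)"
    and stable: "strongly_stable xs (Node l w r) \<or> weakly_stable_left xs (Node l w r)
      \<or> weakly_stable_right xs (Node l w r)"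
    and j: "Suc j < length Xv" and not_root: "Xv ! j \<noteq> w" "Xv ! Suc j \<noteq> w"
  shows "unseparated (set (search_path (Xv ! j) (Node l w r))) w (Xv ! Suc j)"
proof -
  have "Xv ! j \<in> set_tree (Node l w r)" "Xv ! Suc j \<in> set_tree (Node l w r)"
    using j nth_mem[of j Xv] nth_mem[of "Suc j" Xv] unfolding Xv_def subseq_in_def by auto
  then have sides: "Xv ! j \<in> set_tree l \<or> Xv ! j \<in> set_tree r"
    "Xv ! Suc j \<in> set_tree l \<or> Xv ! Suc j \<in> set_tree r"
    using not_root by auto
  note opposite = unseparated_opposite_sides[OF bst]
  note grandchild = unseparated_grandchild[OF bst]
  from stable consider "strongly_stable xs (Node l w r)" | "weakly_stable_left xs (Node l w r)"
    | "weakly_stable_right xs (Node l w r)" by blast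
  then show ?thesis
  proof cases
    case 1
    then have "Xv ! j \<in> set_tree l \<longleftrightarrow> Xv ! Suc j \<in> set_tree r"
      using j unfolding strongly_stable_def Xv_def Let_def by simp
    then show ?thesis using sides opposite by blast
  next
    case 2
    then obtain ul b ur where l: "l = Node ul b ur"
      and "cyclic3 Xv (set_tree ul) (set_tree ur) (set_tree r)"
      unfolding weakly_stable_left_def Xv_def by (auto split: tree.splits)
    from cyclic3_consecutive[OF this(2) j] show ?thesis
    proof (elim disjE conjE)
      assume "Xv ! j \<in> set_tree ul" "Xv ! Suc j \<in> set_tree ur"
      with l show ?thesis by (intro grandchild) blast
    next
      assume "Xv ! j \<in> set_tree ur" "Xv ! Suc j \<in> set_tree r"
      with l show ?thesis by (intro opposite) simp
    next
      assume "Xv ! j \<in> set_tree r" "Xv ! Suc j \<in> set_tree ul"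
      with l show ?thesis by (intro opposite) simp
    qed
  next
    case 3
    then obtain ul b ur where r: "r = Node ul b ur"
      and "cyclic3 Xv (set_tree ur) (set_tree ul) (set_tree l)"
      unfolding weakly_stable_right_def Xv_def by (auto split: tree.splits)
    from cyclic3_consecutive[OF this(2) j] show ?thesis
    proof (elim disjE conjE)
      assume "Xv ! j \<in> set_tree ur" "Xv ! Suc j \<in> set_tree ul"
      with r show ?thesis by (intro grandchild) blast
    next
      assume "Xv ! j \<in> set_tree ul" "Xv ! Suc j \<in> set_tree l"
      with r show ?thesis by (intro opposite) simp
    next
      assume "Xv ! j \<in> set_tree l" "Xv ! Suc j \<in> set_tree ur"
      with r show ?thesis by (intro opposite) simp
    qed
  qed
qed

lemma stable_successor_in_window:
  fixes xs :: "nat list" and T l r :: "nat tree" and w :: nat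
  defines "Xv \<equiv> subseq_in xs (Node l w r)"
  assumes bst: "bst T" and sub: "Node l w r \<in> subtrees T" and inner: "l \<noteq> Leaf"
    and leaves: "set xs \<subseteq> leaf_keys T" and stable: "mixed_stable T xs"
    and j: "Suc j < length Xv"
  shows "unseparated (set (search_path w T) \<union> set (search_path (Xv ! j) (Node l w r)))
    w (Xv ! Suc j)"
proof -
  have "Xv ! j \<in> set Xv" "Xv ! Suc j \<in> set Xv" using j by simp_all
  then have keys: "Xv ! j \<in> leaf_keys T" "Xv ! Suc j \<in> leaf_keys T"
    and y: "Xv ! Suc j \<in> set_tree (Node l w r)"
    using leaves unfolding Xv_def subseq_in_def by auto
  have "w \<notin> leaf_keys T" by (rule inner_key_not_leaf_key[OF bst sub inner])
  moreover have "strongly_stable xs (Node l w r) \<or> weakly_stable_left xs (Node l w r)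
      \<or> weakly_stable_right xs (Node l w r)"
    using stable sub inner unfolding mixed_stable_def by blast
  ultimately have "unseparated (set (search_path (Xv ! j) (Node l w r))) w (Xv ! Suc j)"
    using stable_successor_unseparated[OF bst_subtrees[OF bst sub] _ j[unfolded Xv_def]] keys
    unfolding Xv_def by metis
  with unseparated_ancestors[OF bst sub y] show ?thesis by (simp only: unseparated_Un)
qed

section \<open>Next query times\<close>

definition next_time :: "'a list \<Rightarrow> nat \<Rightarrow> ('a \<Rightarrow> bool) \<Rightarrow> enat" where
  "next_time xs t W =
     (if \<exists>s. t < s \<and> s < length xs \<and> W (xs ! s)
      then enat (LEAST s. t < s \<and> s < length xs \<and> W (xs ! s)) else \<infinity>)"

lemma next_time_le_enat:
  assumes "t < s" "s < length xs" "W (xs ! s)"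
  shows "next_time xs t W \<le> enat s"
  using assms unfolding next_time_def by (auto intro: Least_le)

lemma filter_consecutive:
  assumes "t < s" "s < length xs" "P (xs ! t)" "P (xs ! s)"
    and gap: "\<forall>k. t < k \<and> k < s \<longrightarrow> \<not> P (xs ! k)"
  shows "\<exists>j. Suc j < length (filter P xs) \<and> filter P xs ! j = xs ! t \<and> filter P xs ! Suc j = xs ! s"
proof -
  define mid where "mid = take (s - Suc t) (drop (Suc t) xs)"
  have split: "xs = take t xs @ xs ! t # mid @ xs ! s # drop (Suc s) xs"
    using id_take_nth_drop[of t xs] id_take_nth_drop[of "s - Suc t" "drop (Suc t) xs"] assms(1,2)
    unfolding mid_def by (simp add: Suc_diff_Suc)
  have "filter P mid = []"
    using gap unfolding mid_def filter_empty_conv by (auto simp: in_set_conv_nth)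
  then have "filter P xs = filter P (take t xs) @ xs ! t # xs ! s # filter P (drop (Suc s) xs)"
    using assms(3,4) by (subst split) simp
  then show ?thesis
    by (intro exI[of _ "length (filter P (take t xs))"]) (simp add: nth_append)
qed

lemma next_time_le:
  assumes t: "t < length xs" "xs ! t \<in> S"
    and succ: "\<forall>j. Suc j < length (filter (\<lambda>x. x \<in> S) xs) \<longrightarrow>
      filter (\<lambda>x. x \<in> S) xs ! j = xs ! t \<longrightarrow> W1 (filter (\<lambda>x. x \<in> S) xs ! Suc j)"
    and W2: "\<forall>s. t < s \<longrightarrow> s < length xs \<longrightarrow> W2 (xs ! s) \<longrightarrow> xs ! s \<in> S"
  shows "next_time xs t W1 \<le> next_time xs t W2"
proof (cases "\<exists>s. t < s \<and> s < length xs \<and> W2 (xs ! s)")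
  case True
  define s2 where "s2 = (LEAST s. t < s \<and> s < length xs \<and> W2 (xs ! s))"
  have s2: "t < s2" "s2 < length xs" "W2 (xs ! s2)"
    using LeastI_ex[OF True] unfolding s2_def by auto
  have ex_S: "\<exists>s. t < s \<and> s < length xs \<and> xs ! s \<in> S" using s2 W2 by blast
  define s1 where "s1 = (LEAST s. t < s \<and> s < length xs \<and> xs ! s \<in> S)"
  have s1: "t < s1" "s1 < length xs" "xs ! s1 \<in> S"
    using LeastI_ex[OF ex_S] unfolding s1_def by auto
  have "s1 \<le> s2" unfolding s1_def using s2 W2 by (auto intro: Least_le)
  have "\<forall>k. t < k \<and> k < s1 \<longrightarrow> xs ! k \<notin> S"
  proof (intro allI impI)
    fix k assume "t < k \<and> k < s1"
    then show "xs ! k \<notin> S"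
      using not_less_Least[of k "\<lambda>s. t < s \<and> s < length xs \<and> xs ! s \<in> S"] s1(2)
      unfolding s1_def by auto
  qed
  then obtain j where "Suc j < length (filter (\<lambda>x. x \<in> S) xs)"
    "filter (\<lambda>x. x \<in> S) xs ! j = xs ! t" "filter (\<lambda>x. x \<in> S) xs ! Suc j = xs ! s1"
    using filter_consecutive[of t s1 xs "\<lambda>x. x \<in> S"] s1 t by blast
  then have "W1 (xs ! s1)" using succ by metis
  then have "next_time xs t W1 \<le> enat s1" using next_time_le_enat s1 by blast
  also have "\<dots> \<le> enat s2" using \<open>s1 \<le> s2\<close> by simp
  also have "\<dots> = next_time xs t W2" unfolding next_time_def s2_def using True by simp
  finally show ?thesis .
next
  case False
  then have "next_time xs t W2 = \<infinity>" unfolding next_time_def by auto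
  then show ?thesis by simp
qed

section \<open>Treaps\<close>

declare treap.simps[simp del]

lemma treap_Nil: "treap [] (t # ts) = t"
  by (subst treap.simps) simp

lemma minidx_eq:
  assumes "j < length xs" "\<forall>i<length xs. i \<noteq> j \<longrightarrow> xs ! j < xs ! i"
  shows "minidx xs = j"
  using assms
proof (induction xs arbitrary: j rule: minidx.induct)
  case (3 x y ys)
  have m: "minidx (y # ys) < length (y # ys)" using minidx_less by blast
  show ?case
  proof (cases j)
    case 0
    with "3.prems"(2) m have "x < (y # ys) ! minidx (y # ys)" by fastforce
    with 0 show ?thesis by (simp add: Let_def)
  next
    case (Suc j')
    have "minidx (y # ys) = j'"
    proof (rule "3.IH")
      show "j' < length (y # ys)" using "3.prems"(1) Suc by simp
      show "\<forall>i<length (y # ys). i \<noteq> j' \<longrightarrow> (y # ys) ! j' < (y # ys) ! i"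
        using "3.prems"(2) Suc by (metis Suc_less_eq length_Cons nat.inject nth_Cons_Suc)
    qed
    moreover have "(y # ys) ! j' < x" using "3.prems"(2) Suc by fastforce
    ultimately show ?thesis using Suc by (simp add: Let_def)
  qed
qed simp_all

lemma treap_split:
  assumes "\<forall>kp \<in> set ls \<union> set rs. p < snd kp"
  shows "treap (ls @ (a, p) # rs) ts =
    Node (treap ls (take (Suc (length ls)) ts)) a (treap rs (drop (Suc (length ls)) ts))"
proof -
  let ?kps = "ls @ (a, p) # rs"
  have "minidx (map snd ?kps) = length ls"
    by (rule minidx_eq) (use assms in \<open>auto simp: nth_append nth_Cons' dest: nth_mem\<close>)
  then show ?thesis by (subst treap.simps) (simp add: Let_def nth_append)
qed

lemma sort_Cons_greater: "\<forall>x\<in>set xs. x < (a::'a::linorder) \<Longrightarrow> sort (a # xs) = sort xs @ [a]"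
  by (rule properties_for_sort) (auto simp: sorted_append)

lemma sort_Cons_less: "\<forall>x\<in>set xs. (a::'a::linorder) < x \<Longrightarrow> sort (a # xs) = a # sort xs"
  by (rule properties_for_sort) (auto simp: less_imp_le)

lemma treap_search_path:
  fixes P :: "nat \<Rightarrow> 'b::linorder"
  assumes "bst T" "sorted_wrt (<) (map P (search_path q T))"
  shows "treap (map (\<lambda>v. (v, P v)) (sort (search_path q T))) (hanging q T) = T"
  using assms
proof (induction T)
  case (Node l a r)
  consider "q < a" | "a < q" | "q = a" by fastforce
  then show ?case
  proof cases
    case 1
    have "\<forall>x\<in>set (search_path q l). x < a"
      using Node.prems(1) set_search_path_subset[of q l] by auto
    then have "sort (search_path q (Node l a r)) = sort (search_path q l) @ [a]"
      using 1 sort_Cons_greater by simp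
    then show ?thesis using 1 Node
      by (simp add: treap_split[where rs = "[]"] length_hanging treap_Nil)
  next
    case 2
    have "\<forall>x\<in>set (search_path q r). a < x"
      using Node.prems(1) set_search_path_subset[of q r] by auto
    then have "sort (search_path q (Node l a r)) = a # sort (search_path q r)"
      using 2 sort_Cons_less by simp
    then show ?thesis using 2 Node
      by (simp add: treap_split[where ls = "[]", simplified] treap_Nil)
  next
    case 3
    then show ?thesis
      by (simp add: treap_split[where ls = "[]" and rs = "[]", simplified] treap_Nil)
  qed
qed (simp add: treap_Nil)

section \<open>Greedy Future on mixed-stable sequences\<close>

lemma next_in_eq_next_time: "next_in xs t lo hi = next_time xs t (in_window lo hi)"
  unfolding next_in_def next_time_def ..

lemma gf_step_eq_treap:
  fixes xs :: "nat list" and T :: "nat tree" and t :: nat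
  assumes "bst T"
  shows "gf_step xs t T = treap
    (map (\<lambda>v. (v, (next_time xs t (unseparated (set (search_path (xs ! t) T)) v), depth v T)))
      (sort (search_path (xs ! t) T)))
    (hanging (xs ! t) T)"
proof -
  define p where "p = search_path (xs ! t) T"
  define vs where "vs = sort p"
  define lo where "lo i = (if i = 0 then None else Some (vs ! (i - 1)))" for i
  define hi where "hi i = (if Suc i < length vs then Some (vs ! Suc i) else None)" for i
  define F where "F v = (next_time xs t (unseparated (set p) v), depth v T)" for v
  have sorted: "sorted_wrt (<) vs"
    unfolding vs_def p_def strict_sorted_iff using distinct_search_path[OF assms] by simp
  have gf_step: "gf_step xs t T = treap
      (map (\<lambda>i. (vs ! i, (next_in xs t (lo i) (hi i), depth (vs ! i) T))) [0..<length vs])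
      (hanging (xs ! t) T)"
    unfolding gf_step_def Let_def vs_def p_def lo_def hi_def by (rule refl)
  have "in_window (lo i) (hi i) = unseparated (set p) (vs ! i)" if "i < length vs" for i
    using in_window_iff_unseparated[OF sorted that] unfolding lo_def hi_def vs_def by auto
  then have "map (\<lambda>i. (vs ! i, (next_in xs t (lo i) (hi i), depth (vs ! i) T))) [0..<length vs]
      = map (\<lambda>v. (v, F v)) vs"
    unfolding F_def next_in_eq_next_time by (intro nth_equalityI) simp_all
  then show ?thesis unfolding gf_step F_def vs_def p_def by simp
qed

lemma next_time_along_search_path:
  fixes xs :: "nat list" and T :: "nat tree" and t :: nat
  defines "p \<equiv> search_path (xs ! t) T"
  assumes bst: "bst T" and full: "full_tree T" and leaves: "set xs \<subseteq> leaf_keys T"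
    and stable: "mixed_stable T xs" and t: "t < length xs" and i: "Suc i < length p"
  shows "next_time xs t (unseparated (set p) (p ! i))
    \<le> next_time xs t (unseparated (set p) (p ! Suc i))"
proof -
  have keys: "set xs \<subseteq> set_tree T" using order_trans[OF leaves leaf_keys_subset] .
  then have "xs ! t \<in> set_tree T" using nth_mem[OF t] by blast
  then obtain l r cl cr where sub: "Node l (p ! i) r \<in> subtrees T"
    and q_in: "xs ! t \<in> set_tree (Node l (p ! i) r)"
    and child: "l = Node cl (p ! Suc i) cr \<or> r = Node cl (p ! Suc i) cr"
    and set_p: "set p = set (search_path (p ! i) T) \<union> set (search_path (xs ! t) (Node l (p ! i) r))"
    using search_path_edge[OF bst _ i[unfolded p_def]] unfolding p_def by blast
  let ?S = "set_tree (Node l (p ! i) r)"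
  have "l \<noteq> Leaf" using full sub child unfolding full_tree_def by blast
  show ?thesis
  proof (rule next_time_le[where S = ?S, OF t q_in])
    let ?Xv = "subseq_in xs (Node l (p ! i) r)"
    have "\<forall>j. Suc j < length ?Xv \<longrightarrow> ?Xv ! j = xs ! t \<longrightarrow> unseparated (set p) (p ! i) (?Xv ! Suc j)"
      using stable_successor_in_window[OF bst sub \<open>l \<noteq> Leaf\<close> leaves stable] set_p by metis
    then show "\<forall>j. Suc j < length (filter (\<lambda>x. x \<in> ?S) xs) \<longrightarrow> filter (\<lambda>x. x \<in> ?S) xs ! j = xs ! t
        \<longrightarrow> unseparated (set p) (p ! i) (filter (\<lambda>x. x \<in> ?S) xs ! Suc j)"
      unfolding subseq_in_def .
    have "Node cl (p ! Suc i) cr \<in> subtrees T" using child sub by (auto intro: subtrees_trans)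
    moreover have "set (search_path (p ! Suc i) T) \<subseteq> set p"
      unfolding p_def search_path_nth[OF bst i[unfolded p_def]] by (rule set_take_subset)
    ultimately have "xs ! s \<in> set_tree (Node cl (p ! Suc i) cr)"
      if "s < length xs" "unseparated (set p) (p ! Suc i) (xs ! s)" for s
      using unseparated_imp_in_subtree[OF bst] keys nth_mem that by blast
    then show "\<forall>s. t < s \<longrightarrow> s < length xs \<longrightarrow> unseparated (set p) (p ! Suc i) (xs ! s) \<longrightarrow> xs ! s \<in> ?S"
      using child by auto
  qed
qed

lemma gf_step_id:
  fixes xs :: "nat list" and T :: "nat tree"
  assumes bst: "bst T" and full: "full_tree T" and leaves: "set xs \<subseteq> leaf_keys T"
    and stable: "mixed_stable T xs" and t: "t < length xs"
  shows "gf_step xs t T = T"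
proof -
  let ?p = "search_path (xs ! t) T"
  let ?P = "\<lambda>v. (next_time xs t (unseparated (set ?p) v), depth v T)"
  have "?P (?p ! i) < ?P (?p ! Suc i)" if i: "Suc i < length ?p" for i
  proof -
    have "depth (?p ! i) T = i" "depth (?p ! Suc i) T = Suc i"
      using search_path_nth[OF bst] i unfolding depth_def by simp_all
    then show ?thesis
      using next_time_along_search_path[OF bst full leaves stable t i] by (auto simp: less_prod_def)
  qed
  then have "sorted_wrt (<) (map ?P ?p)"
    by (simp add: sorted_wrt_iff_nth_Suc_transp)
  then show ?thesis
    unfolding gf_step_eq_treap[OF bst] by (rule treap_search_path[OF bst])
qed

theorem lemma2:
  fixes T :: "nat tree" and xs :: "nat list" and n :: nat
  assumes "bst T"
    and "set_tree T = {1..n}"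
    and "full_tree T"
    and "set xs \<subseteq> leaf_keys T"
    and "mixed_stable T xs"
  shows "\<forall>t \<le> length xs. gf_run xs T t = T"
proof (intro allI impI)
  fix t assume "t \<le> length xs"
  then show "gf_run xs T t = T"
    by (induction t) (simp_all add: gf_step_id assms)
qed

end
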